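(* Let $r>0$ and let $G$ be a hyperbolic uniform disk graph with radius $r$. Let $p\in\mathbb{H}^2$, let $\varphi\in(0,\pi/2]$, and let $m$ be a line through $p$ such that for every vertex $v$ of $G$ (disk center, assumed distinct from $p$) the line through $p$ and $v$ makes an angle of at least $\varphi$ with $m$. Then the subgraph of $G$ induced by the vertices at hyperbolic distance at most $r$ from $m$ can be covered with $\mathcal{O}\big(\log\frac{1}{\varphi}\cdot\big(1+\frac{1}{r}\big)\big)$ cliques.
   Context: $\mathbb{H}^2$ denotes the hyperbolic plane of Gaussian curvature $-1$. A hyperbolic uniform disk graph with radius $r$ is the intersection graph of a finite family of closed hyperbolic disks of radius $r$ in $\mathbb{H}^2$: vertices are the disks (identified with their centers), and two vertices are adjacent iff their centers have hyperbolic distance at most $2r$. The $\mathcal{O}$-bound has an absolute implied constant (independent of $G$, $r$, $p$, $m$) and is understood asymptotically as $\varphi\to 0$. *)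

theory Defs
  imports "HOL-Analysis.Analysis"
begin

text \<open>Hyperboloid model of the hyperbolic plane H^2 (curvature -1) in R^3
  with Minkowski bilinear form of signature (-,+,+).\<close>

definition mink :: "real^3 \<Rightarrow> real^3 \<Rightarrow> real" where
  "mink x y = - (x$1 * y$1) + x$2 * y$2 + x$3 * y$3"

definition H2 :: "(real^3) set" where
  "H2 = {x. mink x x = -1 \<and> x$1 > 0}"

definition hdist :: "real^3 \<Rightarrow> real^3 \<Rightarrow> real" where
  "hdist x y = arcosh (- mink x y)"

definition tangent_unit :: "real^3 \<Rightarrow> real^3 \<Rightarrow> bool" where
  "tangent_unit p t \<longleftrightarrow> mink p t = 0 \<and> mink t t = 1"

definition hline :: "real^3 \<Rightarrow> real^3 \<Rightarrow> (real^3) set" where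
  "hline p t = range (\<lambda>s::real. cosh s *\<^sub>R p + sinh s *\<^sub>R t)"

text \<open>Tangent vector at p of the geodesic from p towards v (not normalised).\<close>
definition dir_to :: "real^3 \<Rightarrow> real^3 \<Rightarrow> real^3" where
  "dir_to p v = v + mink p v *\<^sub>R p"

definition line_angle :: "real^3 \<Rightarrow> real^3 \<Rightarrow> real^3 \<Rightarrow> real" where
  "line_angle p v t = arccos (\<bar>mink (dir_to p v) t\<bar> / sqrt (mink (dir_to p v) (dir_to p v)))"

definition hdist_set :: "real^3 \<Rightarrow> (real^3) set \<Rightarrow> real" where
  "hdist_set v L = Inf ((\<lambda>x. hdist v x) ` L)"

text \<open>Uniform disk graph of radius r on vertex set V: adjacency iff hdist \<le> 2r.
  A clique cover of the induced subgraph on S.\<close>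
definition is_clique :: "real \<Rightarrow> (real^3) set \<Rightarrow> bool" where
  "is_clique r K \<longleftrightarrow> (\<forall>x\<in>K. \<forall>y\<in>K. x \<noteq> y \<longrightarrow> hdist x y \<le> 2 * r)"

definition clique_cover :: "real \<Rightarrow> (real^3) set \<Rightarrow> (real^3) set set \<Rightarrow> bool" where
  "clique_cover r S \<C> \<longleftrightarrow> finite \<C> \<and> \<Union>\<C> = S \<and> (\<forall>K\<in>\<C>. K \<subseteq> S \<and> is_clique r K)"

end

theory Submission
  imports Defs
begin

text \<open>Describe a point v of H^2 by Fermi coordinates with respect to the line m:
  its signed distance d v from m and the signed arc length b v from p to its foot point on m.
  In these coordinates
    cosh (hdist v w) = cosh (d v - d w) + cosh (d v) cosh (d w) (cosh (b v - b w) - 1),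
  so two vertices within distance r of m, on the same side of m, whose foot points are
  at most min r 1 apart, are adjacent. The angle condition gives
  sinh \<bar>b v\<bar> sin \<phi> \<le> \<bar>tanh (d v)\<bar> \<le> 1, hence \<bar>b v\<bar> \<le> 2 ln (1/\<phi>). Cutting this
  segment of m into pieces of length min r 1 and separating the two sides of m
  leaves O (ln (1/\<phi>) (1 + 1/r)) cliques.\<close>

lemma mink_sym: "mink x y = mink y x"
  by (simp add: mink_def algebra_simps)

lemma mink_add_left: "mink (x + y) z = mink x z + mink y z"
  by (simp add: mink_def algebra_simps)

lemma mink_diff_left: "mink (x - y) z = mink x z - mink y z"
  by (simp add: mink_def algebra_simps)

lemma mink_add_right: "mink z (x + y) = mink z x + mink z y"
  by (simp add: mink_def algebra_simps)

lemma mink_scaleR_left: "mink (a *\<^sub>R x) z = a * mink x z"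
  by (simp add: mink_def algebra_simps)

lemma mink_scaleR_right: "mink z (a *\<^sub>R x) = a * mink z x"
  by (simp add: mink_def algebra_simps)

lemmas mink_linear = mink_add_left mink_diff_left mink_add_right mink_scaleR_left mink_scaleR_right

lemma mink_H2_self: "v \<in> H2 \<Longrightarrow> mink v v = -1"
  by (simp add: H2_def)

text \<open>The Lorentzian cross product of p and t: for p \<in> H2 and a unit tangent t at p,
  (p, t, frame_normal p t) is an orthonormal frame of Minkowski space.\<close>

definition frame_normal :: "real^3 \<Rightarrow> real^3 \<Rightarrow> real^3" where
  "frame_normal p t = vector [-(p$2*t$3 - p$3*t$2), p$3*t$1 - p$1*t$3, p$1*t$2 - p$2*t$1]"

lemma frame_expansion:
  assumes "p \<in> H2" "tangent_unit p t"
  shows "v = (- mink p v) *\<^sub>R p + mink t v *\<^sub>R t + mink (frame_normal p t) v *\<^sub>R frame_normal p t"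
proof -
  have "- (p$1^2) + p$2^2 + p$3^2 = -1" "- (t$1^2) + t$2^2 + t$3^2 = 1"
    "- (p$1*t$1) + p$2*t$2 + p$3*t$3 = 0"
    using assms unfolding H2_def tangent_unit_def mink_def by (auto simp: power2_eq_square)
  then show ?thesis unfolding vec_eq_iff forall_3 mink_def frame_normal_def
    by (simp add: vector_3) (intro conjI; algebra)
qed

lemma mink_frame_expansion:
  assumes "p \<in> H2" "tangent_unit p t"
  shows "mink v w = - (mink p v * mink p w) + mink t v * mink t w
                    + mink (frame_normal p t) v * mink (frame_normal p t) w"
  by (subst frame_expansion[OF assms, of v]) (simp add: mink_linear)

text \<open>Reverse Cauchy-Schwarz inequality on the upper sheet of the hyperboloid.\<close>

lemma mink_H2_less_0:
  assumes "p \<in> H2" "v \<in> H2"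
  shows "mink p v < 0"
proof -
  have hp: "p$1^2 = 1 + p$2^2 + p$3^2" "p$1 > 0" and hv: "v$1^2 = 1 + v$2^2 + v$3^2" "v$1 > 0"
    using assms unfolding H2_def mink_def by (auto simp: power2_eq_square)
  have "(p$2 * v$2 + p$3 * v$3)^2 \<le> (p$2^2 + p$3^2) * (v$2^2 + v$3^2)"
    using zero_le_power2[of "p$2 * v$3 - p$3 * v$2"] by (simp add: power2_eq_square algebra_simps)
  also have "\<dots> < (p$1 * v$1)^2"
    using hp hv by (simp add: power_mult_distrib)
      (smt (verit) mult_strict_mono zero_le_power2 mult_nonneg_nonneg)
  finally have "\<bar>p$2 * v$2 + p$3 * v$3\<bar> < p$1 * v$1"
    using hp hv by (metis power2_abs power2_less_imp_less mult_pos_pos less_imp_le)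
  then show ?thesis unfolding mink_def by linarith
qed

lemma hdist_le_if_minus_mink_le:
  assumes "1 \<le> - mink v w" "- mink v w \<le> cosh R" "0 \<le> R"
  shows "hdist v w \<le> R"
proof -
  have "cosh (hdist v w) \<le> cosh R"
    using assms by (simp add: hdist_def)
  then show ?thesis
    using assms by (subst (asm) cosh_real_nonneg_le_iff) (auto simp: hdist_def)
qed

lemma hdist_ge_if_cosh_le_minus_mink:
  assumes "cosh D \<le> - mink v w" "0 \<le> D"
  shows "D \<le> hdist v w"
proof -
  have "1 \<le> - mink v w"
    using assms(1) cosh_real_ge_1[of D] by linarith
  then have "cosh D \<le> cosh (hdist v w)"
    using assms by (simp add: hdist_def)
  then show ?thesis
    using assms \<open>1 \<le> - mink v w\<close> by (subst (asm) cosh_real_nonneg_le_iff) (auto simp: hdist_def)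
qed

text \<open>Fermi coordinates with respect to the line hline p t: the signed distance from the
  line (positive on the side of frame_normal p t) and the arc length parameter of the foot
  point.\<close>

definition fermi_dist :: "real^3 \<Rightarrow> real^3 \<Rightarrow> real^3 \<Rightarrow> real" where
  "fermi_dist p t v = arsinh (mink (frame_normal p t) v)"

definition fermi_pos :: "real^3 \<Rightarrow> real^3 \<Rightarrow> real^3 \<Rightarrow> real" where
  "fermi_pos p t v = arsinh (mink t v / cosh (fermi_dist p t v))"

lemma H2_fermi_coords:
  assumes "p \<in> H2" "tangent_unit p t" "v \<in> H2"
  shows "- mink p v = cosh (fermi_dist p t v) * cosh (fermi_pos p t v)"
    and "mink t v = cosh (fermi_dist p t v) * sinh (fermi_pos p t v)"
    and "mink (frame_normal p t) v = sinh (fermi_dist p t v)"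
proof -
  define d where "d = fermi_dist p t v"
  define b where "b = fermi_pos p t v"
  show c: "mink (frame_normal p t) v = sinh (fermi_dist p t v)"
    by (simp add: fermi_dist_def)
  show tv: "mink t v = cosh (fermi_dist p t v) * sinh (fermi_pos p t v)"
    by (simp add: fermi_pos_def)
  have "(- mink p v)^2 = 1 + (mink t v)^2 + (mink (frame_normal p t) v)^2"
    using mink_frame_expansion[OF assms(1,2), of v v] mink_H2_self[OF assms(3)]
    by (simp add: power2_eq_square)
  also have "\<dots> = (cosh d * cosh b)^2"
    unfolding c tv d_def[symmetric] b_def[symmetric] power_mult_distrib
    by (simp add: cosh_square_eq algebra_simps)
  finally have "(- mink p v)^2 = (cosh d * cosh b)^2" .
  moreover have "0 \<le> - mink p v"
    using mink_H2_less_0[OF assms(1,3)] by simp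
  ultimately show "- mink p v = cosh (fermi_dist p t v) * cosh (fermi_pos p t v)"
    unfolding d_def b_def by (metis power2_eq_iff_nonneg cosh_real_nonneg mult_nonneg_nonneg)
qed

lemma minus_mink_fermi:
  assumes "p \<in> H2" "tangent_unit p t" "v \<in> H2" "w \<in> H2"
  shows "- mink v w = cosh (fermi_dist p t v - fermi_dist p t w)
     + cosh (fermi_dist p t v) * cosh (fermi_dist p t w)
       * (cosh (fermi_pos p t v - fermi_pos p t w) - 1)"
proof -
  have "- mink v w = (- mink p v) * (- mink p w) - mink t v * mink t w
                     - mink (frame_normal p t) v * mink (frame_normal p t) w"
    using mink_frame_expansion[OF assms(1,2), of v w] by simp
  then show ?thesis
    unfolding H2_fermi_coords[OF assms(1,2,3)] H2_fermi_coords[OF assms(1,2,4)] cosh_diff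
    by (simp add: algebra_simps)
qed

lemma minus_mink_hline_point:
  assumes "p \<in> H2" "tangent_unit p t" "v \<in> H2"
  shows "- mink v (cosh s *\<^sub>R p + sinh s *\<^sub>R t)
           = cosh (fermi_dist p t v) * cosh (fermi_pos p t v - s)"
proof -
  have "- mink v (cosh s *\<^sub>R p + sinh s *\<^sub>R t) = cosh s * (- mink p v) - sinh s * mink t v"
    by (simp add: mink_linear mink_sym[of v])
  then show ?thesis
    unfolding H2_fermi_coords[OF assms] cosh_diff by (simp add: algebra_simps)
qed

lemma abs_fermi_dist_le_hdist_set:
  assumes "p \<in> H2" "tangent_unit p t" "v \<in> H2"
  shows "\<bar>fermi_dist p t v\<bar> \<le> hdist_set v (hline p t)"
  unfolding hdist_set_def
proof (rule cInf_greatest)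
  show "(\<lambda>x. hdist v x) ` hline p t \<noteq> {}"
    by (simp add: hline_def)
  fix y assume "y \<in> (\<lambda>x. hdist v x) ` hline p t"
  then obtain s where y: "y = hdist v (cosh s *\<^sub>R p + sinh s *\<^sub>R t)"
    by (auto simp: hline_def)
  have "cosh \<bar>fermi_dist p t v\<bar> \<le> cosh (fermi_dist p t v) * cosh (fermi_pos p t v - s)"
    using cosh_real_ge_1[of "fermi_pos p t v - s"] by simp
  then show "\<bar>fermi_dist p t v\<bar> \<le> y"
    unfolding y by (intro hdist_ge_if_cosh_le_minus_mink) (simp_all add: minus_mink_hline_point[OF assms])
qed

lemma line_angle_H2:
  assumes "p \<in> H2" "tangent_unit p t" "v \<in> H2"
  shows "line_angle p v t = arccos (\<bar>mink t v\<bar>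
           / sqrt ((mink t v)^2 + (mink (frame_normal p t) v)^2))"
proof -
  have pt: "mink p t = 0"
    using assms(2) by (simp add: tangent_unit_def)
  have "mink (dir_to p v) t = mink t v"
    unfolding dir_to_def by (simp add: mink_linear pt mink_sym[of v])
  moreover have "mink (dir_to p v) (dir_to p v) = (mink t v)^2 + (mink (frame_normal p t) v)^2"
    using mink_frame_expansion[OF assms(1,2), of v v] mink_H2_self[OF assms(1)]
    unfolding dir_to_def by (simp add: mink_linear mink_sym[of v p] power2_eq_square)
  ultimately show ?thesis
    by (simp add: line_angle_def)
qed

lemma abs_mult_sin_le_if_le_arccos:
  fixes b c \<phi> :: real
  assumes "0 \<le> \<phi>" "\<phi> \<le> arccos (\<bar>b\<bar> / sqrt (b^2 + c^2))"
  shows "\<bar>b\<bar> * sin \<phi> \<le> \<bar>c\<bar>"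
proof (cases "b = 0")
  case False
  define s where "s = sqrt (b^2 + c^2)"
  have s: "0 < s" "s^2 = b^2 + c^2"
    using False by (simp_all add: s_def add_pos_nonneg)
  have "\<bar>b\<bar> \<le> s"
    unfolding s_def by (metis real_sqrt_abs real_sqrt_le_mono le_add_same_cancel1 zero_le_power2)
  then have x: "0 \<le> \<bar>b\<bar> / s" "\<bar>b\<bar> / s \<le> 1"
    using s(1) by simp_all
  then have "cos (arccos (\<bar>b\<bar> / s)) \<le> cos \<phi>"
    using assms arccos_ubound[of "\<bar>b\<bar> / s"] unfolding s_def[symmetric]
    by (intro cos_monotone_0_pi_le) simp_all
  then have "\<bar>b\<bar> / s \<le> cos \<phi>"
    using x by simp
  then have "b^2 \<le> (cos \<phi>)^2 * s^2"
    using s(1) by (metis abs_ge_zero divide_nonneg_pos pos_divide_le_eq power2_abs power_mono power_mult_distrib)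
  then have "(\<bar>b\<bar> * sin \<phi>)^2 \<le> (cos \<phi>)^2 * c^2"
    unfolding s(2) by (simp add: power_mult_distrib sin_squared_eq algebra_simps)
  also have "\<dots> \<le> c^2"
    by (rule mult_left_le_one_le) (simp_all add: abs_square_le_1 abs_cos_le_one)
  finally show ?thesis
    by (metis power2_abs power2_le_imp_le abs_ge_zero)
qed simp

lemma abs_sinh_fermi_pos_mult_sin_le_1:
  assumes "p \<in> H2" "tangent_unit p t" "v \<in> H2" "0 \<le> \<phi>" "\<phi> \<le> line_angle p v t"
  shows "\<bar>sinh (fermi_pos p t v)\<bar> * sin \<phi> \<le> 1"
proof -
  have "cosh (fermi_dist p t v) * (\<bar>sinh (fermi_pos p t v)\<bar> * sin \<phi>)
          = \<bar>mink t v\<bar> * sin \<phi>"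
    by (simp add: H2_fermi_coords(2)[OF assms(1-3)] abs_mult)
  also have "\<dots> \<le> \<bar>sinh (fermi_dist p t v)\<bar>"
    using abs_mult_sin_le_if_le_arccos assms(4,5)
    unfolding line_angle_H2[OF assms(1-3)] H2_fermi_coords(3)[OF assms(1-3)] by blast
  also have "\<dots> \<le> cosh (fermi_dist p t v) * 1"
    using sinh_le_cosh_real[of "\<bar>fermi_dist p t v\<bar>"] by simp
  finally show ?thesis
    by (simp add: mult_le_cancel_left_pos)
qed

lemma sin_ge_half:
  fixes x :: real
  assumes "0 \<le> x" "x \<le> 1"
  shows "x / 2 \<le> sin x"
proof (cases "x = 0")
  case False
  then obtain z where z: "0 < z" "z < x" "sin x - sin 0 = (x - 0) * cos z"
    using MVT2[of 0 x sin cos] assms by (auto intro: DERIV_sin)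
  have "cos (pi / 3) \<le> cos z"
    using z assms pi_gt3 by (intro cos_monotone_0_pi_le) auto
  then have "x * (1 / 2) \<le> x * cos z"
    using assms by (intro mult_left_mono) (auto simp: cos_60)
  then show ?thesis
    using z by simp
qed simp

lemma abs_le_2_ln_inverse:
  fixes x \<phi> :: real
  assumes "0 < \<phi>" "\<phi> \<le> 1/5" "\<bar>sinh x\<bar> * sin \<phi> \<le> 1"
  shows "\<bar>x\<bar> \<le> 2 * ln (1 / \<phi>)"
proof -
  have sin: "\<phi> / 2 \<le> sin \<phi>"
    using assms by (intro sin_ge_half) auto
  have "sinh (2 * ln (1 / \<phi>)) = (1 / \<phi>^2 - \<phi>^2) / 2"
    using assms(1) by (simp add: sinh_def exp_minus' exp_of_nat_mult[of 2, simplified]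
                                 power2_eq_square field_simps)
  moreover have "4 * \<phi> + \<phi>^4 \<le> 1"
  proof -
    have "\<phi>^4 \<le> (1/5)^4"
      using assms by (intro power_mono) auto
    then show ?thesis
      using assms(2) by (simp add: power_divide)
  qed
  then have "2 / \<phi> \<le> (1 / \<phi>^2 - \<phi>^2) / 2"
    using assms(1) by (simp add: field_simps power2_eq_square power4_eq_xxxx)
  moreover have "\<bar>sinh x\<bar> \<le> 2 / \<phi>"
  proof -
    have "\<bar>sinh x\<bar> * (\<phi> / 2) \<le> 1"
      using assms(3) sin by (meson abs_ge_zero mult_left_mono order_trans)
    then show ?thesis
      using assms(1) by (simp add: field_simps)
  qed
  ultimately have "sinh \<bar>x\<bar> \<le> sinh (2 * ln (1 / \<phi>))"
    by simp
  then show ?thesis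
    by (simp del: sinh_real_abs)
qed

lemma cosh_1_le_2: "cosh (1::real) \<le> 2"
proof -
  have "cosh (1::real) = (exp 1 + exp (-1)) / 2"
    by (simp add: cosh_def)
  moreover have "exp (-1::real) \<le> 1"
    by simp
  ultimately show ?thesis
    using exp_le by argo
qed

text \<open>With h = cosh r and c = cosh (min r 1) this bounds the diameter of a cell.\<close>

lemma cell_polynomial_bound:
  fixes c h :: real
  assumes "1 \<le> c" "c \<le> 2" "c \<le> h"
  shows "h + h^2 * (c - 1) \<le> 2 * h^2 - 1"
proof -
  have "c * c \<le> 2 * c"
    using assms by (intro mult_right_mono) auto
  then have "0 \<le> (c - 1) * (1 + 2 * c - c^2)"
    using assms(1) unfolding power2_eq_square by (intro mult_nonneg_nonneg) linarith+
  moreover have "0 \<le> (h - c) * ((3 - c) * (h + c) - 1)"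
    using assms by (intro mult_nonneg_nonneg) (auto intro: order_trans[of _ "1 * (h + c)"])
  ultimately show ?thesis
    by (simp add: power2_eq_square algebra_simps)
qed

lemma cosh_cell_bound:
  fixes r :: real
  assumes "0 \<le> r"
  shows "cosh r + (cosh r)^2 * (cosh (min r 1) - 1) \<le> cosh (2 * r)"
proof -
  have "cosh (min r 1) \<le> cosh 1" "cosh (min r 1) \<le> cosh r"
    using assms by (simp_all add: cosh_real_nonneg_le_iff)
  then show ?thesis
    using cell_polynomial_bound[of "cosh (min r 1)" "cosh r"] cosh_real_ge_1 cosh_1_le_2
    by (simp add: cosh_double_cosh)
qed

lemma cosh_le_cosh_if_abs_le:
  fixes x y :: real
  assumes "\<bar>x\<bar> \<le> \<bar>y\<bar>"
  shows "cosh x \<le> cosh y"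
  using assms cosh_real_nonneg_le_iff[of "\<bar>x\<bar>" "\<bar>y\<bar>"] by simp

lemma hdist_le_if_same_fermi_cell:
  assumes "p \<in> H2" "tangent_unit p t" "v \<in> H2" "w \<in> H2"
    and "\<bar>fermi_dist p t v\<bar> \<le> r" "\<bar>fermi_dist p t w\<bar> \<le> r"
    and "(0 \<le> fermi_dist p t v) = (0 \<le> fermi_dist p t w)"
    and "\<bar>fermi_pos p t v - fermi_pos p t w\<bar> \<le> min r 1"
  shows "hdist v w \<le> 2 * r"
proof -
  define dv dw \<beta> where "dv = fermi_dist p t v" and "dw = fermi_dist p t w"
    and "\<beta> = fermi_pos p t v - fermi_pos p t w"
  have r: "0 \<le> r"
    using assms(5) by linarith
  have mink: "- mink v w = cosh (dv - dw) + cosh dv * cosh dw * (cosh \<beta> - 1)"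
    unfolding dv_def dw_def \<beta>_def by (rule minus_mink_fermi[OF assms(1-4)])
  have "cosh (dv - dw) \<le> cosh r"
    using assms(5-7) r by (intro cosh_le_cosh_if_abs_le) (auto simp: dv_def dw_def)
  moreover have "cosh dv * cosh dw \<le> (cosh r)^2"
    using assms(5,6) unfolding power2_eq_square dv_def dw_def
    by (intro mult_mono cosh_le_cosh_if_abs_le) auto
  moreover have "0 \<le> cosh \<beta> - 1" "cosh \<beta> - 1 \<le> cosh (min r 1) - 1"
    using assms(8) cosh_real_ge_1[of \<beta>] r by (auto simp: \<beta>_def intro: cosh_le_cosh_if_abs_le)
  ultimately have "- mink v w \<le> cosh r + (cosh r)^2 * (cosh (min r 1) - 1)"
    unfolding mink by (smt (verit) mult_mono cosh_real_nonneg mult_nonneg_nonneg)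
  also have "\<dots> \<le> cosh (2 * r)"
    using cosh_cell_bound[OF r] .
  finally have "- mink v w \<le> cosh (2 * r)" .
  moreover have "1 \<le> - mink v w"
    unfolding mink using cosh_real_ge_1[of "dv - dw"] cosh_real_ge_1[of \<beta>]
    by (smt (verit) cosh_real_nonneg mult_nonneg_nonneg)
  ultimately show ?thesis
    using r by (intro hdist_le_if_minus_mink_le) auto
qed

lemma clique_cover_by_key:
  assumes "finite S" "finite K" "key ` S \<subseteq> K"
    and "\<And>v w. v \<in> S \<Longrightarrow> w \<in> S \<Longrightarrow> key v = key w \<Longrightarrow> hdist v w \<le> 2 * r"
  shows "\<exists>\<C>. clique_cover r S \<C> \<and> card \<C> \<le> card K"
proof (intro exI conjI)
  let ?\<C> = "(\<lambda>k. {v\<in>S. key v = k}) ` key ` S"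
  show "clique_cover r S ?\<C>"
    using assms(1,4) by (auto simp: clique_cover_def is_clique_def)
  have "card ?\<C> \<le> card (key ` S)"
    using assms(1) by (intro card_image_le) simp
  also have "\<dots> \<le> card K"
    using assms(2,3) by (rule card_mono)
  finally show "card ?\<C> \<le> card K" .
qed

lemma floor_divide_in_range:
  fixes b L \<delta> :: real
  assumes "0 < \<delta>" "\<bar>b\<bar> \<le> L"
  shows "\<lfloor>b / \<delta>\<rfloor> \<in> {-\<lceil>L / \<delta>\<rceil>..\<lceil>L / \<delta>\<rceil>}"
proof -
  have "- (L / \<delta>) \<le> b / \<delta>" "b / \<delta> \<le> L / \<delta>"
    using divide_right_mono[of "- L" b \<delta>] divide_right_mono[of b L \<delta>] assms by auto
  then have "\<lfloor>- (L / \<delta>)\<rfloor> \<le> \<lfloor>b / \<delta>\<rfloor>" "\<lfloor>b / \<delta>\<rfloor> \<le> \<lceil>L / \<delta>\<rceil>"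
    by (simp_all only: floor_mono order_trans[OF floor_le_ceiling ceiling_mono])
  then show ?thesis
    by (simp add: ceiling_def)
qed

lemma abs_diff_less_if_floor_divide_eq:
  fixes a b \<delta> :: real
  assumes "0 < \<delta>" "\<lfloor>a / \<delta>\<rfloor> = \<lfloor>b / \<delta>\<rfloor>"
  shows "\<bar>a - b\<bar> < \<delta>"
proof -
  obtain k where "\<lfloor>a / \<delta>\<rfloor> = k" "\<lfloor>b / \<delta>\<rfloor> = k"
    using assms(2) by simp
  then have "\<bar>a / \<delta> - b / \<delta>\<bar> < 1"
    unfolding floor_eq_iff abs_less_iff by linarith
  then show ?thesis
    using assms(1) by (simp add: diff_divide_distrib[symmetric] divide_less_eq)
qed

lemma fermi_box_clique_cover:
  assumes "p \<in> H2" "tangent_unit p t" "finite S" "S \<subseteq> H2" "0 < r" "0 \<le> L"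
    and "\<And>v. v \<in> S \<Longrightarrow> \<bar>fermi_dist p t v\<bar> \<le> r \<and> \<bar>fermi_pos p t v\<bar> \<le> L"
  shows "\<exists>\<C>. clique_cover r S \<C> \<and> real (card \<C>) \<le> 4 * \<lceil>L / min r 1\<rceil> + 2"
proof -
  define \<delta> M where "\<delta> = min r 1" and "M = \<lceil>L / \<delta>\<rceil>"
  define key where "key v = (0 \<le> fermi_dist p t v, \<lfloor>fermi_pos p t v / \<delta>\<rfloor>)" for v
  define K :: "(bool \<times> int) set" where "K = UNIV \<times> {-M..M}"
  have \<delta>: "0 < \<delta>"
    using assms(5) by (simp add: \<delta>_def)
  have "key ` S \<subseteq> K"
    unfolding K_def key_def M_def using floor_divide_in_range[OF \<delta>] assms(7) by auto
  moreover have "hdist v w \<le> 2 * r" if "v \<in> S" "w \<in> S" "key v = key w" for v w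
  proof (rule hdist_le_if_same_fermi_cell[OF assms(1,2)])
    show "v \<in> H2" "w \<in> H2"
      using that(1,2) assms(4) by auto
    show "\<bar>fermi_dist p t v\<bar> \<le> r" "\<bar>fermi_dist p t w\<bar> \<le> r"
      using that(1,2) assms(7) by auto
    show "(0 \<le> fermi_dist p t v) = (0 \<le> fermi_dist p t w)"
      using that(3) by (simp add: key_def)
    have "\<bar>fermi_pos p t v - fermi_pos p t w\<bar> < \<delta>"
      using that(3) by (intro abs_diff_less_if_floor_divide_eq[OF \<delta>]) (simp add: key_def)
    then show "\<bar>fermi_pos p t v - fermi_pos p t w\<bar> \<le> min r 1"
      by (simp add: \<delta>_def)
  qed
  ultimately obtain \<C> where "clique_cover r S \<C>" "card \<C> \<le> card K"
    using clique_cover_by_key[OF assms(3), of K key r] by (auto simp: K_def)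
  moreover have "real (card K) = 4 * M + 2"
  proof -
    have "0 \<le> L / \<delta>"
      using assms(6) \<delta> by simp
    then have "0 \<le> M"
      by (simp add: M_def)
    then show ?thesis
      by (simp add: K_def card_cartesian_product)
  qed
  ultimately show ?thesis
    unfolding \<delta>_def M_def by auto
qed

lemma one_le_ln_inverse:
  fixes \<phi> :: real
  assumes "0 < \<phi>" "\<phi> \<le> 1/3"
  shows "1 \<le> ln (1 / \<phi>)"
proof -
  have "\<phi> * exp 1 \<le> 1"
    using mult_left_mono[OF exp_le, of \<phi>] assms by linarith
  then have "exp 1 \<le> 1 / \<phi>"
    using assms(1) by (simp add: field_simps)
  then show ?thesis
    using assms(1) by (simp add: ln_ge_iff)
qed

lemma cell_count_le:
  fixes l r :: real
  assumes "0 < r" "1 \<le> l"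
  shows "4 * \<lceil>2 * l / min r 1\<rceil> + 2 \<le> 14 * l * (1 + 1 / r)"
proof -
  define x where "x = l / min r 1"
  have "x \<le> l * (1 + 1 / r)"
    using assms by (auto simp: x_def min_def field_simps)
  moreover have "1 \<le> l * (1 + 1 / r)"
    using assms by (simp add: order_trans[OF _ mult_right_mono[of 1 l]])
  moreover have "real_of_int \<lceil>2 * l / min r 1\<rceil> \<le> 2 * x + 1"
    using of_int_ceiling_le_add_one[of "2 * x"] by (simp add: x_def)
  ultimately show ?thesis
    by linarith
qed

theorem corollary10:
  shows "\<exists>C \<phi>0::real. C > 0 \<and> \<phi>0 > 0 \<and>
    (\<forall>r V p t \<phi>. r > 0 \<longrightarrow> finite V \<longrightarrow> V \<subseteq> H2 \<longrightarrow> p \<in> H2 \<longrightarrow> p \<notin> V \<longrightarrow>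
       tangent_unit p t \<longrightarrow> 0 < \<phi> \<longrightarrow> \<phi> \<le> pi / 2 \<longrightarrow> \<phi> \<le> \<phi>0 \<longrightarrow>
       (\<forall>v\<in>V. line_angle p v t \<ge> \<phi>) \<longrightarrow>
       (\<exists>\<C>. clique_cover r {v\<in>V. hdist_set v (hline p t) \<le> r} \<C> \<and>
             real (card \<C>) \<le> C * ln (1 / \<phi>) * (1 + 1 / r)))"
proof (rule exI[of _ 14], rule exI[of _ "1/5"], intro conjI allI impI)
  fix r \<phi> :: real and V :: "(real^3) set" and p t :: "real^3"
  assume r: "0 < r" and V: "finite V" "V \<subseteq> H2" and "p \<in> H2" "p \<notin> V" "tangent_unit p t"
    and "0 < \<phi>" "\<phi> \<le> pi / 2" "\<phi> \<le> 1/5" and angle: "\<forall>v\<in>V. \<phi> \<le> line_angle p v t"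
  note p = \<open>p \<in> H2\<close> \<open>tangent_unit p t\<close> and \<phi> = \<open>0 < \<phi>\<close> \<open>\<phi> \<le> 1/5\<close>
  define S where "S = {v\<in>V. hdist_set v (hline p t) \<le> r}"
  have ln: "1 \<le> ln (1 / \<phi>)"
    using \<phi> by (intro one_le_ln_inverse) auto
  have "\<bar>fermi_dist p t v\<bar> \<le> r \<and> \<bar>fermi_pos p t v\<bar> \<le> 2 * ln (1 / \<phi>)" if "v \<in> S" for v
  proof -
    have v: "v \<in> H2" "hdist_set v (hline p t) \<le> r" "\<phi> \<le> line_angle p v t"
      using that V(2) angle by (auto simp: S_def)
    show ?thesis
      using abs_fermi_dist_le_hdist_set[OF p v(1)] v(2) abs_le_2_ln_inverse[OF \<phi>]
        abs_sinh_fermi_pos_mult_sin_le_1[OF p v(1) less_imp_le[OF \<phi>(1)] v(3)] by auto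
  qed
  moreover have "finite S" "S \<subseteq> H2"
    using V by (auto simp: S_def)
  ultimately obtain \<C> where "clique_cover r S \<C>"
    and "real (card \<C>) \<le> 4 * \<lceil>2 * ln (1 / \<phi>) / min r 1\<rceil> + 2"
    using fermi_box_clique_cover[OF p _ _ r, of S "2 * ln (1 / \<phi>)"] ln by auto
  with cell_count_le[OF r ln]
  show "\<exists>\<C>. clique_cover r {v\<in>V. hdist_set v (hline p t) \<le> r} \<C> \<and>
             real (card \<C>) \<le> 14 * ln (1 / \<phi>) * (1 + 1 / r)"
    unfolding S_def[symmetric] by auto
qed (simp_all)

end
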